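(* For every $r>0$ and $\mu\in P_{n-1}$, $d\pi_{(\mu,r)}(\mathcal L)=-r^2\,\mathrm{Id}$.
   Context: On $\mathbb C^n$, $\langle x,y\rangle=\sum x_j\overline{y_j}$, $(x,y)=\mathrm{Re}\langle x,y\rangle$, $\omega=\mathrm{Im}\langle\cdot,\cdot\rangle$. $\mathbb H_n=\mathbb C^n\times\mathbb R$ with $(z,t)(z',t')=(z+z',t+t'-\frac12\omega(z,z'))$; $G_n=U(n)\ltimes\mathbb H_n$ with $(A,z,t)(B,z',t')=(AB,z+Az',t+t'-\frac12\omega(z,Az'))$. $P_{n-1}$ is the set of $\mu\in\mathbb Z^{n-1}$ with $\mu_1\ge\dots\ge\mu_{n-1}$; $\rho_\mu$ is the irreducible representation of $U(n-1)$ with highest weight $\mu$, $U(n-1)\subset U(n)$ as $\mathrm{diag}(B,1)$. $v_r=(0,\dots,0,r)^T$, $\chi_r(z,t)=e^{-i(v_r,z)}$, $\pi_{(\mu,r)}=\mathrm{Ind}_{U(n-1)\ltimes\mathbb H_n}^{G_n}(\rho_\mu\otimes\chi_r)$, realized so that $\pi_{(\mu,r)}(A,z,t)\xi(B)=e^{-i(Bv_r,z)}\xi(A^{-1}B)$. The left invariant vector fields on $\mathbb H_n$ are $Z_j=2\frac{\partial}{\partial\bar z_j}+\frac{iz_j}2\frac\partial{\partial t}$, $\overline{Z_j}=2\frac\partial{\partial z_j}-\frac{i\bar z_j}2\frac\partial{\partial t}$, and the sub-Laplacian is $\mathcal L=\frac12\sum_{j=1}^n(Z_j\overline{Z_j}+\overline{Z_j}Z_j)$;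 $d\pi$ denotes the derived representation of the universal enveloping algebra on smooth vectors. *)

theory Defs
  imports "HOL-Analysis.Analysis"
begin

text \<open>Explicit coordinates: vectors in C^m are functions nat => complex (only indices < m matter,
  entries outside are 0); m x m matrices are functions nat => nat => complex, zero outside range.
  Index n-1 plays the role of the last coordinate.\<close>

type_synonym cvec = "nat \<Rightarrow> complex"
type_synonym cmat = "nat \<Rightarrow> nat \<Rightarrow> complex"

definition supp_vec :: "nat \<Rightarrow> cvec \<Rightarrow> bool" where
  "supp_vec m v \<longleftrightarrow> (\<forall>k\<ge>m. v k = 0)"

definition supp_mat :: "nat \<Rightarrow> cmat \<Rightarrow> bool" where
  "supp_mat m A \<longleftrightarrow> (\<forall>i j. (m \<le> i \<or> m \<le> j) \<longrightarrow> A i j = 0)"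

definition mat_mult :: "nat \<Rightarrow> cmat \<Rightarrow> cmat \<Rightarrow> cmat" where
  "mat_mult m A B = (\<lambda>i j. if i < m \<and> j < m then (\<Sum>k<m. A i k * B k j) else 0)"

definition mat_vec :: "nat \<Rightarrow> cmat \<Rightarrow> cvec \<Rightarrow> cvec" where
  "mat_vec m A v = (\<lambda>i. if i < m then (\<Sum>k<m. A i k * v k) else 0)"

definition id_mat :: "nat \<Rightarrow> cmat" where
  "id_mat m = (\<lambda>i j. if i < m \<and> j < m \<and> i = j then 1 else 0)"

definition adj_mat :: "nat \<Rightarrow> cmat \<Rightarrow> cmat" where
  "adj_mat m A = (\<lambda>i j. if i < m \<and> j < m then cnj (A j i) else 0)"

definition unitary_grp :: "nat \<Rightarrow> cmat set" where
  "unitary_grp m = {A. supp_mat m A \<and> mat_mult m (adj_mat m A) A = id_mat m}"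

text \<open>U(n-1) inside U(n) as the block matrices diag(B,1).\<close>
definition U_sub :: "nat \<Rightarrow> cmat set" where
  "U_sub n = {A \<in> unitary_grp n. \<forall>k<n. A k (n - 1) = (if k = n - 1 then 1 else 0)
                                   \<and> A (n - 1) k = (if k = n - 1 then 1 else 0)}"

definition herm :: "nat \<Rightarrow> cvec \<Rightarrow> cvec \<Rightarrow> complex" where
  "herm n x y = (\<Sum>j<n. x j * cnj (y j))"

definition re_inner :: "nat \<Rightarrow> cvec \<Rightarrow> cvec \<Rightarrow> real" where
  "re_inner n x y = Re (herm n x y)"

definition omega :: "nat \<Rightarrow> cvec \<Rightarrow> cvec \<Rightarrow> real" where
  "omega n x y = Im (herm n x y)"

text \<open>Group law of G_n = U(n) \<ltimes> H_n (elements (A,z,t)).\<close>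
definition G_mult :: "nat \<Rightarrow> cmat \<times> cvec \<times> real \<Rightarrow> cmat \<times> cvec \<times> real \<Rightarrow> cmat \<times> cvec \<times> real" where
  "G_mult n g h = (case g of (A, z, t) \<Rightarrow> case h of (B, z', t') \<Rightarrow>
     (mat_mult n A B, (\<lambda>j. z j + mat_vec n A z' j), t + t' - omega n z (mat_vec n A z') / 2))"

text \<open>Dominant integral weights P_{n-1}: integer vectors indexed by 0..n-2, non-increasing.\<close>
definition P_dom :: "nat \<Rightarrow> (nat \<Rightarrow> int) set" where
  "P_dom m = {\<mu>. (\<forall>k\<ge>m. \<mu> k = 0) \<and> (\<forall>k. k + 1 < m \<longrightarrow> \<mu> (k + 1) \<le> \<mu> k)}"

definition torus_elt :: "nat \<Rightarrow> (nat \<Rightarrow> real) \<Rightarrow> cmat" where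
  "torus_elt n \<theta> = (\<lambda>i j. if i < n \<and> j < n \<and> i = j then
                          (if i = n - 1 then 1 else exp (\<i> * of_real (\<theta> i))) else 0)"

text \<open>Finite-dimensional representations of U(n-1) realised on C^d by d x d matrices.\<close>
definition unitary_rep :: "nat \<Rightarrow> nat \<Rightarrow> (cmat \<Rightarrow> cmat) \<Rightarrow> bool" where
  "unitary_rep n d \<rho> \<longleftrightarrow> 0 < d
     \<and> (\<forall>A\<in>U_sub n. \<rho> A \<in> unitary_grp d)
     \<and> (\<forall>A\<in>U_sub n. \<forall>B\<in>U_sub n. \<rho> (mat_mult n A B) = mat_mult d (\<rho> A) (\<rho> B))
     \<and> (\<forall>i j. continuous_on (U_sub n) (\<lambda>A. \<rho> A i j))"

definition invariant_subspace :: "nat \<Rightarrow> nat \<Rightarrow> (cmat \<Rightarrow> cmat) \<Rightarrow> cvec set \<Rightarrow> bool" where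
  "invariant_subspace n d \<rho> W \<longleftrightarrow> (\<forall>w\<in>W. supp_vec d w) \<and> (\<lambda>k. 0) \<in> W
     \<and> (\<forall>v\<in>W. \<forall>w\<in>W. (\<lambda>k. v k + w k) \<in> W)
     \<and> (\<forall>c::complex. \<forall>w\<in>W. (\<lambda>k. c * w k) \<in> W)
     \<and> (\<forall>A\<in>U_sub n. \<forall>w\<in>W. mat_vec d (\<rho> A) w \<in> W)"

definition irreducible_rep :: "nat \<Rightarrow> nat \<Rightarrow> (cmat \<Rightarrow> cmat) \<Rightarrow> bool" where
  "irreducible_rep n d \<rho> \<longleftrightarrow> unitary_rep n d \<rho> \<and>
     (\<forall>W. invariant_subspace n d \<rho> W \<longrightarrow> W = {\<lambda>k. 0} \<or> W = {w. supp_vec d w})"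

definition is_weight :: "nat \<Rightarrow> nat \<Rightarrow> (cmat \<Rightarrow> cmat) \<Rightarrow> (nat \<Rightarrow> int) \<Rightarrow> bool" where
  "is_weight n d \<rho> wt \<longleftrightarrow> (\<forall>k\<ge>n - 1. wt k = 0) \<and>
     (\<exists>w. supp_vec d w \<and> w \<noteq> (\<lambda>k. 0) \<and>
        (\<forall>\<theta>. mat_vec d (\<rho> (torus_elt n \<theta>)) w =
              (\<lambda>k. exp (\<i> * of_real (\<Sum>l<n - 1. of_int (wt l) * \<theta> l)) * w k)))"

text \<open>Dominance order: mu - lambda is a non-negative integer combination of positive roots e_k - e_{k+1}.\<close>
definition dominated :: "nat \<Rightarrow> (nat \<Rightarrow> int) \<Rightarrow> (nat \<Rightarrow> int) \<Rightarrow> bool" where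
  "dominated m wt \<mu> \<longleftrightarrow> (\<forall>p\<le>m. (\<Sum>k<p. wt k) \<le> (\<Sum>k<p. \<mu> k)) \<and> (\<Sum>k<m. wt k) = (\<Sum>k<m. \<mu> k)"

definition irrep_hw :: "nat \<Rightarrow> nat \<Rightarrow> (cmat \<Rightarrow> cmat) \<Rightarrow> (nat \<Rightarrow> int) \<Rightarrow> bool" where
  "irrep_hw n d \<rho> \<mu> \<longleftrightarrow> irreducible_rep n d \<rho> \<and> is_weight n d \<rho> \<mu> \<and>
     (\<forall>wt. is_weight n d \<rho> wt \<longrightarrow> dominated (n - 1) wt \<mu>)"

text \<open>Space of the induced representation: C^d-valued functions xi on U(n) with
  xi(B k) = rho(k)^{-1} xi(B) for k in U(n-1).\<close>
definition ind_space :: "nat \<Rightarrow> nat \<Rightarrow> (cmat \<Rightarrow> cmat) \<Rightarrow> (cmat \<Rightarrow> cvec) set" where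
  "ind_space n d \<rho> = {\<xi>. (\<forall>B\<in>unitary_grp n. supp_vec d (\<xi> B)) \<and>
     (\<forall>B\<in>unitary_grp n. \<forall>K\<in>U_sub n. \<xi> (mat_mult n B K) = mat_vec d (adj_mat d (\<rho> K)) (\<xi> B))}"

definition v_r :: "nat \<Rightarrow> real \<Rightarrow> cvec" where
  "v_r n r = (\<lambda>k. if k = n - 1 then of_real r else 0)"

definition pi_rep :: "nat \<Rightarrow> real \<Rightarrow> cmat \<times> cvec \<times> real \<Rightarrow> (cmat \<Rightarrow> cvec) \<Rightarrow> (cmat \<Rightarrow> cvec)" where
  "pi_rep n r g \<xi> = (case g of (A, z, t) \<Rightarrow>
     (\<lambda>B k. exp (- \<i> * of_real (re_inner n (mat_vec n B (v_r n r)) z)) * \<xi> (mat_mult n (adj_mat n A) B) k))"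

text \<open>Derived representation of an element (v,c) of the Lie algebra of H_n (a left-invariant
  vector field, identified with its value at the identity); its one-parameter group in G_n is
  s |-> (I, s v, s c).\<close>
definition dpi :: "nat \<Rightarrow> real \<Rightarrow> cvec \<times> real \<Rightarrow> (cmat \<Rightarrow> cvec) \<Rightarrow> (cmat \<Rightarrow> cvec)" where
  "dpi n r X \<xi> = (case X of (v, c) \<Rightarrow>
     (\<lambda>B k. vector_derivative
        (\<lambda>s. pi_rep n r (id_mat n, (\<lambda>j. of_real s * v j), s * c) \<xi> B k) (at 0)))"

definition unit_vec :: "nat \<Rightarrow> complex \<Rightarrow> cvec" where
  "unit_vec j a = (\<lambda>k. if k = j then a else 0)"

text \<open>Z_j = X_j + i Y_j and conj Z_j = X_j - i Y_j, where X_j = d/dx_j - (y_j/2) d/dt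
  corresponds to (e_j,0) and Y_j = d/dy_j + (x_j/2) d/dt to (i e_j,0).\<close>
definition dpi_Z :: "nat \<Rightarrow> real \<Rightarrow> nat \<Rightarrow> (cmat \<Rightarrow> cvec) \<Rightarrow> (cmat \<Rightarrow> cvec)" where
  "dpi_Z n r j \<xi> = (\<lambda>B k. dpi n r (unit_vec j 1, 0) \<xi> B k + \<i> * dpi n r (unit_vec j \<i>, 0) \<xi> B k)"

definition dpi_Zbar :: "nat \<Rightarrow> real \<Rightarrow> nat \<Rightarrow> (cmat \<Rightarrow> cvec) \<Rightarrow> (cmat \<Rightarrow> cvec)" where
  "dpi_Zbar n r j \<xi> = (\<lambda>B k. dpi n r (unit_vec j 1, 0) \<xi> B k - \<i> * dpi n r (unit_vec j \<i>, 0) \<xi> B k)"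

definition dpi_L :: "nat \<Rightarrow> real \<Rightarrow> (cmat \<Rightarrow> cvec) \<Rightarrow> (cmat \<Rightarrow> cvec)" where
  "dpi_L n r \<xi> = (\<lambda>B k. (1/2) * (\<Sum>j<n. dpi_Z n r j (dpi_Zbar n r j \<xi>) B k
                                       + dpi_Zbar n r j (dpi_Z n r j \<xi>) B k))"

end

theory Submission
  imports Defs
begin

text \<open>At a fixed B \<in> U(n), the centre-free one-parameter subgroups s \<mapsto> (I, s v, 0) act on
  \<xi>(B) by the character exp(-i s (B v_r, v)), so each d\<pi>(v,0) is multiplication by
  -i (B v_r, v). With w = B v_r this makes d\<pi>(Z_j) and d\<pi>(conj Z_j) multiplication by
  -i w_j and -i conj w_j, so d\<pi>(L) is multiplication by -|w|^2 = -r^2, the columns of a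
  unitary matrix being unit vectors. Neither \<mu>, \<rho> nor the equivariance of \<xi> plays a role.\<close>

lemma adj_mat_id_mat: "adj_mat n (id_mat n) = id_mat n"
  by (auto simp: adj_mat_def id_mat_def fun_eq_iff)

lemma mat_mult_id_left:
  assumes "supp_mat n B"
  shows "mat_mult n (id_mat n) B = B"
proof (intro ext)
  fix i j
  show "mat_mult n (id_mat n) B i j = B i j"
  proof (cases "i < n \<and> j < n")
    case True
    have "(\<Sum>k<n. id_mat n i k * B k j) = (\<Sum>k\<in>{i}. B k j)"
      by (rule sum.mono_neutral_cong_right) (use True in \<open>auto simp: id_mat_def\<close>)
    then show ?thesis using True by (simp add: mat_mult_def)
  next
    case False
    then show ?thesis using assms by (auto simp: mat_mult_def supp_mat_def)
  qed
qed

lemma re_inner_scaleR_right: "re_inner n w (\<lambda>j. of_real s * v j) = s * re_inner n w v"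
proof -
  have "herm n w (\<lambda>j. of_real s * v j) = of_real s * herm n w v"
    by (simp add: herm_def sum_distrib_left algebra_simps)
  then show ?thesis by (simp add: re_inner_def)
qed

lemma re_inner_unit_vec: "j < n \<Longrightarrow> re_inner n w (unit_vec j c) = Re (w j * cnj c)"
proof -
  assume j: "j < n"
  have "herm n w (unit_vec j c) = (\<Sum>k\<in>{j}. w k * cnj (unit_vec j c k))"
    unfolding herm_def by (rule sum.mono_neutral_cong_right) (use j in \<open>auto simp: unit_vec_def\<close>)
  then show ?thesis by (simp add: re_inner_def unit_vec_def)
qed

lemma mat_vec_v_r: "1 \<le> n \<Longrightarrow> j < n \<Longrightarrow> mat_vec n B (v_r n r) j = B j (n - 1) * of_real r"
proof -
  assume n: "1 \<le> n" and j: "j < n"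
  have "(\<Sum>k<n. B j k * v_r n r k) = (\<Sum>k\<in>{n - 1}. B j k * v_r n r k)"
    by (rule sum.mono_neutral_cong_right) (use n in \<open>auto simp: v_r_def\<close>)
  then show ?thesis using j by (simp add: mat_vec_def v_r_def)
qed

lemma unitary_last_column_norm:
  assumes "B \<in> unitary_grp n" "1 \<le> n"
  shows "(\<Sum>j<n. (cmod (B j (n - 1)))\<^sup>2) = 1"
proof -
  have "mat_mult n (adj_mat n B) B (n - 1) (n - 1) = id_mat n (n - 1) (n - 1)"
    using assms(1) by (simp add: unitary_grp_def)
  then have "(\<Sum>k<n. cnj (B k (n - 1)) * B k (n - 1)) = 1"
    using assms(2) by (simp add: mat_mult_def adj_mat_def id_mat_def)
  then have "complex_of_real (\<Sum>k<n. (cmod (B k (n - 1)))\<^sup>2) = 1"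
    by (simp add: complex_norm_square mult.commute del: of_real_power)
  then show ?thesis using of_real_eq_1_iff by blast
qed

lemma norm_mat_vec_v_r:
  assumes "B \<in> unitary_grp n" "1 \<le> n"
  shows "(\<Sum>j<n. (cmod (mat_vec n B (v_r n r) j))\<^sup>2) = r\<^sup>2"
proof -
  have "(\<Sum>j<n. (cmod (mat_vec n B (v_r n r) j))\<^sup>2) = (\<Sum>j<n. (cmod (B j (n - 1)))\<^sup>2) * r\<^sup>2"
    using assms(2) by (simp add: mat_vec_v_r norm_mult power_mult_distrib sum_distrib_right)
  then show ?thesis using unitary_last_column_norm[OF assms] by simp
qed

lemma dpi_horizontal:
  assumes "supp_mat n B"
  shows "dpi n r (v, 0) \<eta> B k = - \<i> * of_real (re_inner n (mat_vec n B (v_r n r)) v) * \<eta> B k"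
proof -
  define c where "c = re_inner n (mat_vec n B (v_r n r)) v"
  define f where "f x = exp (- \<i> * x * of_real c) * \<eta> B k" for x
  have orbit: "(\<lambda>s. pi_rep n r (id_mat n, (\<lambda>j. of_real s * v j), 0) \<eta> B k)
      = (\<lambda>s::real. f (of_real s))"
    by (simp add: f_def c_def pi_rep_def adj_mat_id_mat mat_mult_id_left[OF assms]
        re_inner_scaleR_right mult.assoc)
  have "(f has_field_derivative - \<i> * of_real c * \<eta> B k) (at (of_real 0))"
    unfolding f_def by (auto intro!: derivative_eq_intros)
  then have "((\<lambda>s::real. f (of_real s)) has_vector_derivative - \<i> * of_real c * \<eta> B k) (at 0)"
    by (rule has_vector_derivative_real_field)
  then show ?thesis
    by (simp add: dpi_def orbit c_def vector_derivative_at)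
qed

lemma dpi_Z_eq:
  assumes "supp_mat n B" "j < n"
  shows "dpi_Z n r j \<eta> B k = - \<i> * mat_vec n B (v_r n r) j * \<eta> B k"
proof -
  define w where "w = mat_vec n B (v_r n r) j"
  have "dpi_Z n r j \<eta> B k = (- \<i> * of_real (Re w) + of_real (Im w)) * \<eta> B k"
    unfolding dpi_Z_def dpi_horizontal[OF assms(1)] re_inner_unit_vec[OF assms(2)] w_def
    by (simp add: algebra_simps)
  also have "\<dots> = - \<i> * w * \<eta> B k"
    by (simp add: complex_eq_iff)
  finally show ?thesis by (simp add: w_def)
qed

lemma dpi_Zbar_eq:
  assumes "supp_mat n B" "j < n"
  shows "dpi_Zbar n r j \<eta> B k = - \<i> * cnj (mat_vec n B (v_r n r) j) * \<eta> B k"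
proof -
  define w where "w = mat_vec n B (v_r n r) j"
  have "dpi_Zbar n r j \<eta> B k = (- \<i> * of_real (Re w) - of_real (Im w)) * \<eta> B k"
    unfolding dpi_Zbar_def dpi_horizontal[OF assms(1)] re_inner_unit_vec[OF assms(2)] w_def
    by (simp add: algebra_simps)
  also have "\<dots> = - \<i> * cnj w * \<eta> B k"
    by (simp add: complex_eq_iff)
  finally show ?thesis by (simp add: w_def)
qed

theorem lemma5p1:
  fixes n d :: nat and r :: real and \<mu> :: "nat \<Rightarrow> int"
    and \<rho> :: "cmat \<Rightarrow> cmat" and \<xi> :: "cmat \<Rightarrow> cvec"
  assumes "1 \<le> n" and "0 < r"
    and "\<mu> \<in> P_dom (n - 1)"
    and "irrep_hw n d \<rho> \<mu>"
    and "\<xi> \<in> ind_space n d \<rho>"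
  shows "\<forall>B\<in>unitary_grp n. dpi_L n r \<xi> B = (\<lambda>k. - (of_real (r\<^sup>2)) * \<xi> B k)"
proof (intro ballI ext)
  fix B k assume B: "B \<in> unitary_grp n"
  then have supp: "supp_mat n B" by (simp add: unitary_grp_def)
  define w where "w = mat_vec n B (v_r n r)"
  have "dpi_L n r \<xi> B k = (1/2) * (\<Sum>j<n. 2 * (- \<i> * w j * (- \<i> * cnj (w j))) * \<xi> B k)"
    unfolding dpi_L_def
    by (intro arg_cong[where f="\<lambda>x. (1/2) * x"] sum.cong refl)
       (simp add: dpi_Z_eq[OF supp] dpi_Zbar_eq[OF supp] w_def algebra_simps)
  also have "\<dots> = (\<Sum>j<n. - \<i> * w j * (- \<i> * cnj (w j))) * \<xi> B k"
    by (simp add: sum_distrib_right sum_distrib_left[symmetric] mult.assoc)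
  also have "(\<Sum>j<n. - \<i> * w j * (- \<i> * cnj (w j))) = - of_real (\<Sum>j<n. (cmod (w j))\<^sup>2)"
    by (simp add: sum_negf[symmetric] complex_norm_square algebra_simps del: of_real_power)
  also have "(\<Sum>j<n. (cmod (w j))\<^sup>2) = r\<^sup>2"
    unfolding w_def by (rule norm_mat_vec_v_r[OF B assms(1)])
  finally show "dpi_L n r \<xi> B k = - (of_real (r\<^sup>2)) * \<xi> B k" .
qed

end
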